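(* Fix a total order on the subsets of $\mathbb N_n$, for instance the lexicographic order, and write $I<J$ accordingly. The family $$\mathfrak B^{\mathbb R}=\{2^{-n/2}b_K: K\subseteq\mathbb N_n\}\ \cup\ \Big\{\tfrac{b_K(\mathbf c_{I,J}+\mathbf c_{J,I})}{2^{(n+1-|I\cup J|)/2}},\ \tfrac{-i\,b_K(\mathbf c_{I,J}-\mathbf c_{J,I})}{2^{(n+1-|I\cup J|)/2}}:\ K,I,J\subseteq\mathbb N_n \text{ mutually disjoint},\ I<J\Big\}$$ consists of self-adjoint operators and is an orthonormal $\mathbb C$-basis of $\mathcal L^2(\mathcal F)$. Moreover, for every $k\in\mathbb N_0$, the set $\mathfrak B^{\mathbb R}\cap\mathcal O_k^{\mathrm{sa}}$ is an orthonormal $\mathbb R$-basis of $\mathcal O_k^{\mathrm{sa}}$. Explicitly, it consists of two kinds of elements: - the elements $2^{-n/2}b_K$ with $|K|\le k$; - the elements of the second set above with $|I|+|J|+2|K|=2l$ for some $0\le l\le k$.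
   Context: Let $\mathfrak h$ be a complex Hilbert space of dimension $n<\infty$ with orthonormal basis $\varphi_1,\dots,\varphi_n$, and $\mathbb N_n=\{1,\dots,n\}$. $\mathcal F=\bigoplus_k\bigwedge^k\mathfrak h$ is the fermion Fock space. For $\omega\in\mathcal F$, $\mathbf c^*(\omega)\xi=\omega\wedge\xi$ and $\mathbf c(\omega)=\mathbf c^*(\omega)^*$. For $A=\{a_1<\dots<a_k\}$, $\varphi_A=\varphi_{a_1}\wedge\cdots\wedge\varphi_{a_k}$ (with $\varphi_\emptyset$ the vacuum). Put $\mathbf c^*_A=\mathbf c^*(\varphi_A)$, $\mathbf c_A=\mathbf c(\varphi_A)$, $\mathbf c_{A,B}=\mathbf c^*_A\mathbf c_B$, and $\mathbf n_A=\mathbf c_{A,A}$. For $K\subseteq\mathbb N_n$ let $b_K=\sum_{I\subseteq K}(-2)^{|I|}\mathbf n_I$. $\mathcal L^2(\mathcal F)$ is the space of operators on $\mathcal F$ with $\langle a,b\rangle=\operatorname{tr}(a^*b)$. $\mathcal O_k$, the space of $k$-body operators, is the complex span of all $\mathbf c^*(\omega)\mathbf c(\eta)$ with $\omega\in\bigwedge^r\mathfrak h$, $\eta\in\bigwedge^s\mathfrak h$, and $r+s=2l$ for some $0\le l\le k$. $\mathcal O_k^{\mathrm{sa}}$ is the real subspace of self-adjoint elements of $\mathcal O_k$. *)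

theory Defs
  imports "HOL-Analysis.Analysis" "HOL-Library.Function_Algebras"
begin

text \<open>The Fock space over h = C^n (basis phi_1..phi_n) has orthonormal basis
  phi_A, A a subset of {1..n}. Vectors/forms are coefficient functions on subsets; operators
  are represented by their matrices M X Y = < phi_X , M phi_Y >, supported on subsets of {1..n}.\<close>

type_synonym fop = "nat set \<Rightarrow> nat set \<Rightarrow> complex"

definition Nn :: "nat \<Rightarrow> nat set" where "Nn n = {1..n}"

definition smul :: "complex \<Rightarrow> fop \<Rightarrow> fop" where
  "smul c M = (\<lambda>X Y. c * M X Y)"

definition adj :: "fop \<Rightarrow> fop" where
  "adj M = (\<lambda>X Y. cnj (M Y X))"

definition mmul :: "nat \<Rightarrow> fop \<Rightarrow> fop \<Rightarrow> fop" where
  "mmul n M N = (\<lambda>X Y. \<Sum>Z\<in>Pow (Nn n). M X Z * N Z Y)"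

text \<open>The space L^2(F) of (all) operators on F, with inner product tr(a^* b).\<close>
definition L2 :: "nat \<Rightarrow> fop set" where
  "L2 n = {M. \<forall>X Y. M X Y \<noteq> 0 \<longrightarrow> X \<subseteq> Nn n \<and> Y \<subseteq> Nn n}"

definition hs_inner :: "nat \<Rightarrow> fop \<Rightarrow> fop \<Rightarrow> complex" where
  "hs_inner n a b = (\<Sum>X\<in>Pow (Nn n). \<Sum>Y\<in>Pow (Nn n). cnj (a X Y) * b X Y)"

text \<open>Sign of phi_A wedge phi_B relative to phi_(A union B) (A, B disjoint):
  (-1) to the number of inversions.\<close>
definition wsign :: "nat set \<Rightarrow> nat set \<Rightarrow> complex" where
  "wsign A B = (-1) ^ card {(a, b). a \<in> A \<and> b \<in> B \<and> b < a}"

text \<open>Creation operator c^*_A = c^*(phi_A): xi \<mapsto> phi_A wedge xi.\<close>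
definition cstarA :: "nat \<Rightarrow> nat set \<Rightarrow> fop" where
  "cstarA n A = (\<lambda>X Y. if A \<subseteq> Nn n \<and> Y \<subseteq> Nn n \<and> A \<inter> Y = {} \<and> X = A \<union> Y
                        then wsign A Y else 0)"

text \<open>The r-th exterior power of h: coefficient functions supported on r-subsets.\<close>
definition wedge :: "nat \<Rightarrow> nat \<Rightarrow> (nat set \<Rightarrow> complex) set" where
  "wedge n r = {w. \<forall>A. w A \<noteq> 0 \<longrightarrow> A \<subseteq> Nn n \<and> card A = r}"

definition cstar :: "nat \<Rightarrow> (nat set \<Rightarrow> complex) \<Rightarrow> fop" where
  "cstar n w = (\<Sum>A\<in>Pow (Nn n). smul (w A) (cstarA n A))"

definition cann :: "nat \<Rightarrow> (nat set \<Rightarrow> complex) \<Rightarrow> fop" where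
  "cann n w = adj (cstar n w)"

definition cc :: "nat \<Rightarrow> nat set \<Rightarrow> nat set \<Rightarrow> fop" where
  "cc n A B = mmul n (cstarA n A) (adj (cstarA n B))"

definition nA :: "nat \<Rightarrow> nat set \<Rightarrow> fop" where
  "nA n A = cc n A A"

definition bK :: "nat \<Rightarrow> nat set \<Rightarrow> fop" where
  "bK n K = (\<Sum>I\<in>Pow K. smul ((-2) ^ card I) (nA n I))"

definition cspan :: "fop set \<Rightarrow> fop set" where
  "cspan G = {M. \<exists>S c. finite S \<and> S \<subseteq> G \<and> M = (\<Sum>v\<in>S. smul (c v) v)}"

definition rspan :: "fop set \<Rightarrow> fop set" where
  "rspan G = {M. \<exists>S (c :: fop \<Rightarrow> real). finite S \<and> S \<subseteq> G \<and>
                  M = (\<Sum>v\<in>S. smul (complex_of_real (c v)) v)}"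

definition Ok :: "nat \<Rightarrow> nat \<Rightarrow> fop set" where
  "Ok n k = cspan {mmul n (cstar n w) (cann n e) | w e r s l.
                    w \<in> wedge n r \<and> e \<in> wedge n s \<and> r + s = 2 * l \<and> l \<le> k}"

definition Osa :: "nat \<Rightarrow> nat \<Rightarrow> fop set" where
  "Osa n k = {M \<in> Ok n k. adj M = M}"

datatype bidx = BD "nat set" | BRe "nat set" "nat set" "nat set" | BIm "nat set" "nat set" "nat set"

definition mdisj :: "nat \<Rightarrow> nat set \<Rightarrow> nat set \<Rightarrow> nat set \<Rightarrow> bool" where
  "mdisj n K I J \<longleftrightarrow> K \<subseteq> Nn n \<and> I \<subseteq> Nn n \<and> J \<subseteq> Nn n \<and>
      K \<inter> I = {} \<and> K \<inter> J = {} \<and> I \<inter> J = {}"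

definition Bidx :: "nat \<Rightarrow> (nat set \<times> nat set) set \<Rightarrow> bidx set" where
  "Bidx n R = {BD K | K. K \<subseteq> Nn n}
     \<union> {BRe K I J | K I J. mdisj n K I J \<and> (I, J) \<in> R}
     \<union> {BIm K I J | K I J. mdisj n K I J \<and> (I, J) \<in> R}"

fun bvec :: "nat \<Rightarrow> bidx \<Rightarrow> fop" where
  "bvec n (BD K) = smul (complex_of_real (1 / sqrt (2 ^ n))) (bK n K)"
| "bvec n (BRe K I J) = smul (complex_of_real (1 / sqrt (2 ^ (n + 1 - card (I \<union> J)))))
        (mmul n (bK n K) (cc n I J + cc n J I))"
| "bvec n (BIm K I J) = smul (- \<i> * complex_of_real (1 / sqrt (2 ^ (n + 1 - card (I \<union> J)))))
        (mmul n (bK n K) (cc n I J - cc n J I))"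

fun bdeg_ok :: "nat \<Rightarrow> bidx \<Rightarrow> bool" where
  "bdeg_ok k (BD K) \<longleftrightarrow> card K \<le> k"
| "bdeg_ok k (BRe K I J) \<longleftrightarrow> (\<exists>l\<le>k. card I + card J + 2 * card K = 2 * l)"
| "bdeg_ok k (BIm K I J) \<longleftrightarrow> (\<exists>l\<le>k. card I + card J + 2 * card K = 2 * l)"

definition orthonormal_fam :: "nat \<Rightarrow> bidx set \<Rightarrow> (bidx \<Rightarrow> fop) \<Rightarrow> bool" where
  "orthonormal_fam n S f \<longleftrightarrow>
     (\<forall>i\<in>S. \<forall>j\<in>S. hs_inner n (f i) (f j) = (if i = j then 1 else 0))"

end

theory Submission
  imports Defs
begin

text \<open>
  Write T(K,I,J) = b_K c_{I,J} (the operator bcc n K I J below). In the basis phi_X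
  the operator b_K is diagonal with entries (-1)^|K \<inter> X|, and for disjoint I, J the
  operator c_{I,J} is a signed partial permutation matrix supported on the pairs
  (I \<union> Z, J \<union> Z), Z disjoint from I \<union> J.
  Hence the Hilbert-Schmidt product of T(K,I,J) and T(K',I',J') vanishes unless
  (I,J) = (I',J'), and then it is the sum over the subsets Z of C = N_n - (I \<union> J) of a
  product of two characters, which is 2^|C| or 0 according as K = K' or not. This gives
  orthonormality; inverting the characters writes every matrix unit through the T(K,X-Y,Y-X),
  which gives spanning.

  The space O_k is spanned by the c_{A,B} with |A| + |B| = 2l, l \<le> k. Expanding
  b_K = \<Sum>_{L \<subseteq> K} (-2)^|L| n_L writes T(K,I,J) through the c_{I \<union> L, J \<union> L}, so
  T(K,I,J) lies in O_k when |I| + |J| + 2|K| \<le> 2k. Conversely, a nonzero product of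
  T(K,I,J) with c_{A,B} forces A = I \<union> L, B = J \<union> L with K \<subseteq> L, so the remaining
  basis elements are orthogonal to O_k. Expanding a self-adjoint k-body operator in the
  basis therefore gives real coefficients, supported on the basis elements lying in O_k.
\<close>

section \<open>Operators as matrices\<close>

lemma sum_fun_apply: "(\<Sum>i\<in>S. f i) x = (\<Sum>i\<in>S. f i x)"
  by (induction S rule: infinite_finite_induct) auto

lemma smul_apply [simp]: "smul c M X Y = c * M X Y"
  by (simp add: smul_def)

lemma adj_apply [simp]: "adj M X Y = cnj (M Y X)"
  by (simp add: adj_def)

lemma finite_Nn [simp]: "finite (Nn n)"
  by (simp add: Nn_def)

lemma card_Nn [simp]: "card (Nn n) = n"
  by (simp add: Nn_def)

interpretation cmod: module smul
  by unfold_locales (auto simp: smul_def fun_eq_iff algebra_simps)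

interpretation rmod: module "\<lambda>r::real. smul (complex_of_real r)"
  by unfold_locales (auto simp: smul_def fun_eq_iff algebra_simps)

lemma cspan_eq_span: "cspan G = cmod.span G"
  by (auto simp: cspan_def cmod.span_explicit)

lemma rspan_eq_span: "rspan G = rmod.span G"
  by (auto simp: rspan_def rmod.span_explicit)

lemma adj_smul [simp]: "adj (smul c M) = smul (cnj c) (adj M)"
  by (simp add: fun_eq_iff)

lemma adj_add [simp]: "adj (M + N) = adj M + adj N"
  by (simp add: fun_eq_iff)

lemma adj_diff [simp]: "adj (M - N) = adj M - adj N"
  by (simp add: fun_eq_iff)

lemma mmul_add_right: "mmul n M (N + P) = mmul n M N + mmul n M P"
  by (simp add: mmul_def fun_eq_iff distrib_left sum.distrib)

lemma mmul_diff_right: "mmul n M (N - P) = mmul n M N - mmul n M P"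
  by (simp add: mmul_def fun_eq_iff right_diff_distrib sum_subtractf)

lemma hs_inner_add_right [simp]: "hs_inner n M (N + P) = hs_inner n M N + hs_inner n M P"
  by (simp add: hs_inner_def distrib_left sum.distrib)

lemma hs_inner_diff_right [simp]: "hs_inner n M (N - P) = hs_inner n M N - hs_inner n M P"
  by (simp add: hs_inner_def right_diff_distrib sum_subtractf)

lemma hs_inner_minus_right [simp]: "hs_inner n M (- N) = - hs_inner n M N"
  by (simp add: hs_inner_def sum_negf)

lemma hs_inner_smul_right [simp]: "hs_inner n M (smul c N) = c * hs_inner n M N"
  by (simp add: hs_inner_def sum_distrib_left ac_simps)

lemma hs_inner_zero_right [simp]: "hs_inner n M 0 = 0"
  by (simp add: hs_inner_def)

lemma hs_inner_cnj: "cnj (hs_inner n M N) = hs_inner n N M"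
  by (simp add: hs_inner_def mult.commute)

lemma hs_inner_add_left [simp]: "hs_inner n (M + N) P = hs_inner n M P + hs_inner n N P"
  by (metis hs_inner_add_right hs_inner_cnj complex_cnj_add)

lemma hs_inner_diff_left [simp]: "hs_inner n (M - N) P = hs_inner n M P - hs_inner n N P"
  by (metis hs_inner_diff_right hs_inner_cnj complex_cnj_diff)

lemma hs_inner_minus_left [simp]: "hs_inner n (- M) N = - hs_inner n M N"
  by (metis hs_inner_minus_right hs_inner_cnj complex_cnj_minus)

lemma hs_inner_smul_left [simp]: "hs_inner n (smul c M) N = cnj c * hs_inner n M N"
  by (metis hs_inner_smul_right hs_inner_cnj complex_cnj_mult)

lemma hs_inner_adj: "hs_inner n (adj M) (adj N) = hs_inner n N M"
  unfolding hs_inner_def by (subst sum.swap) (simp add: mult.commute)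

lemma hs_inner_self_adjoint_real:
  assumes "adj M = M" and "adj N = N"
  shows "cnj (hs_inner n M N) = hs_inner n M N"
  by (metis assms hs_inner_adj hs_inner_cnj)

lemma hs_inner_span_zero:
  assumes "\<And>g. g \<in> G \<Longrightarrow> hs_inner n M g = 0" and "N \<in> cmod.span G"
  shows "hs_inner n M N = 0"
proof (rule cmod.span_induct[where P = "\<lambda>N. hs_inner n M N = 0", OF assms(2)])
  show "cmod.subspace {N. hs_inner n M N = 0}"
    by (simp add: cmod.subspace_def)
qed (use assms(1) in auto)

lemma hs_inner_span_orthogonal:
  assumes "\<And>g h. g \<in> G \<Longrightarrow> h \<in> H \<Longrightarrow> hs_inner n g h = 0"
    and "M \<in> cmod.span G" and "N \<in> cmod.span H"
  shows "hs_inner n M N = 0"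
proof (rule hs_inner_span_zero[OF _ assms(3)])
  fix h assume h: "h \<in> H"
  have "hs_inner n h g = 0" if "g \<in> G" for g
    using assms(1)[OF that h] hs_inner_cnj[of n g h] by simp
  then have "hs_inner n h M = 0"
    using assms(2) by (rule hs_inner_span_zero)
  then show "hs_inner n M h = 0"
    using hs_inner_cnj[of n h M] by simp
qed

lemma hs_inner_pair:
  assumes "hs_inner n u u = w" "hs_inner n v v = w" "hs_inner n u v = 0"
    and "cnj c = c" "c * (c * (2 * w)) = 1"
  shows "hs_inner n (smul c (u + v)) (smul c (u + v)) = 1"
    and "hs_inner n (smul (- \<i> * c) (u - v)) (smul (- \<i> * c) (u - v)) = 1"
    and "hs_inner n (smul c (u + v)) (smul (- \<i> * c) (u - v)) = 0"
    and "hs_inner n (smul (- \<i> * c) (u - v)) (smul c (u + v)) = 0"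
proof -
  have "hs_inner n v u = 0"
    using assms(3) hs_inner_cnj by (metis complex_cnj_zero)
  then show "hs_inner n (smul c (u + v)) (smul c (u + v)) = 1"
    and "hs_inner n (smul (- \<i> * c) (u - v)) (smul (- \<i> * c) (u - v)) = 1"
    and "hs_inner n (smul c (u + v)) (smul (- \<i> * c) (u - v)) = 0"
    and "hs_inner n (smul (- \<i> * c) (u - v)) (smul c (u + v)) = 0"
    using assms by (simp_all add: algebra_simps)
qed

lemma pair_recover:
  assumes "c \<noteq> 0"
  shows "u = smul (1 / (2 * c)) (smul c (u + v)) + smul (\<i> / (2 * c)) (smul (- \<i> * c) (u - v))"
    and "v = smul (1 / (2 * c)) (smul c (u + v)) + smul (- \<i> / (2 * c)) (smul (- \<i> * c) (u - v))"
  using assms by (auto simp: fun_eq_iff field_simps)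

lemma orthonormal_expansion:
  assumes "orthonormal_fam n S f" and "finite S" and "M \<in> cmod.span (f ` S)"
  shows "M = (\<Sum>i\<in>S. smul (hs_inner n (f i) M) (f i))"
proof -
  define E where "E M = (\<Sum>i\<in>S. smul (hs_inner n (f i) M) (f i))" for M
  have add: "E (x + y) = E x + E y" for x y
    by (simp add: E_def cmod.scale_left_distrib sum.distrib)
  have scale: "E (smul c x) = smul c (E x)" for c x
    by (simp add: E_def cmod.scale_sum_right)
  have base: "E (f j) = f j" if "j \<in> S" for j
  proof -
    have "E (f j) = (\<Sum>i\<in>S. if i = j then f j else 0)"
      unfolding E_def using assms(1) that by (intro sum.cong) (auto simp: orthonormal_fam_def)
    then show ?thesis
      using that assms(2) by simp
  qed
  have "cmod.subspace {M. E M = M}"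
    by (rule cmod.subspaceI) (simp_all add: add scale E_def[of 0])
  then have "E M = M"
    using cmod.span_induct[OF assms(3), of "\<lambda>M. E M = M"] base by blast
  then show ?thesis
    by (simp add: E_def)
qed

lemma L2_iff: "M \<in> L2 n \<longleftrightarrow> (\<forall>X Y. \<not> (X \<subseteq> Nn n \<and> Y \<subseteq> Nn n) \<longrightarrow> M X Y = 0)"
  by (auto simp: L2_def)

lemma L2_subspace: "cmod.subspace (L2 n)"
  by (auto simp: cmod.subspace_def L2_iff)

lemma mmul_in_L2:
  assumes "M \<in> L2 n" and "N \<in> L2 n"
  shows "mmul n M N \<in> L2 n"
  unfolding L2_iff mmul_def
proof (intro allI impI)
  fix X Y assume "\<not> (X \<subseteq> Nn n \<and> Y \<subseteq> Nn n)"
  then have "M X Z * N Z Y = 0" for Z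
    using assms unfolding L2_iff by (metis mult_eq_0_iff)
  then show "(\<Sum>Z\<in>Pow (Nn n). M X Z * N Z Y) = 0"
    by (simp add: sum.neutral)
qed

definition munit :: "nat set \<Rightarrow> nat set \<Rightarrow> fop" where
  "munit X Y = (\<lambda>X' Y'. if X' = X \<and> Y' = Y then 1 else 0)"

lemma L2_munit_expansion:
  assumes "M \<in> L2 n"
  shows "M = (\<Sum>X\<in>Pow (Nn n). \<Sum>Y\<in>Pow (Nn n). smul (M X Y) (munit X Y))"
proof (intro ext)
  fix X' Y'
  have entry: "smul (M X Y) (munit X Y) X' Y' = (if X = X' then if Y = Y' then M X' Y' else 0 else 0)"
    for X Y by (auto simp: munit_def)
  have "(\<Sum>X\<in>Pow (Nn n). \<Sum>Y\<in>Pow (Nn n). smul (M X Y) (munit X Y)) X' Y' =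
      (\<Sum>X\<in>Pow (Nn n). if X = X' then \<Sum>Y\<in>Pow (Nn n). if Y = Y' then M X' Y' else 0 else 0)"
    unfolding sum_fun_apply entry by (intro sum.cong) auto
  also have "\<dots> = M X' Y'"
    using assms by (auto simp: L2_iff sum.delta)
  finally show "M X' Y' = (\<Sum>X\<in>Pow (Nn n). \<Sum>Y\<in>Pow (Nn n). smul (M X Y) (munit X Y)) X' Y'" ..
qed

section \<open>Signs and character sums\<close>

lemma wsign_real [simp]: "cnj (wsign A B) = wsign A B"
  by (simp add: wsign_def)

lemma wsign_square [simp]: "wsign A B * wsign A B = 1"
  by (simp add: wsign_def flip: power_add mult_2)

lemma wsign_nonzero: "wsign A B \<noteq> 0"
  by (simp add: wsign_def)

lemma wsign_Un_right:
  assumes "finite A" "finite B" "finite C" "B \<inter> C = {}"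
  shows "wsign A (B \<union> C) = wsign A B * wsign A C"
proof -
  let ?P = "\<lambda>B. {(a, b). a \<in> A \<and> b \<in> B \<and> b < a}"
  have "?P (B \<union> C) = ?P B \<union> ?P C" and "?P B \<inter> ?P C = {}"
    using assms(4) by auto
  moreover have "finite (?P B)" "finite (?P C)"
    by (rule finite_subset[of _ "A \<times> _"], use assms in auto)+
  ultimately show ?thesis
    by (simp add: wsign_def card_Un_disjoint power_add)
qed

lemma wsign_Un_left:
  assumes "finite A" "finite B" "finite C" "A \<inter> B = {}"
  shows "wsign (A \<union> B) C = wsign A C * wsign B C"
proof -
  let ?P = "\<lambda>A. {(a, b). a \<in> A \<and> b \<in> C \<and> b < a}"
  have "?P (A \<union> B) = ?P A \<union> ?P B" and "?P A \<inter> ?P B = {}"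
    using assms(4) by auto
  moreover have "finite (?P A)" "finite (?P B)"
    by (rule finite_subset[of _ "_ \<times> C"], use assms in auto)+
  ultimately show ?thesis
    by (simp add: wsign_def card_Un_disjoint power_add)
qed

lemma wsign_shift:
  assumes "finite I" "finite Z" "L \<subseteq> Z" "L \<inter> I = {}"
  shows "wsign (I \<union> L) (Z - L) = wsign I Z * wsign I L * wsign L (Z - L)"
proof -
  have fin: "finite L" "finite (Z - L)"
    using assms finite_subset by auto
  have "Z = L \<union> (Z - L)"
    using assms(3) by blast
  then have "wsign I Z = wsign I L * wsign I (Z - L)"
    using wsign_Un_right[OF assms(1) fin, of] by (metis Diff_disjoint)
  moreover have "wsign (I \<union> L) (Z - L) = wsign I (Z - L) * wsign L (Z - L)"
    using assms(4) by (intro wsign_Un_left) (auto simp: assms(1) fin)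
  ultimately show ?thesis
    by (simp add: algebra_simps)
qed

lemma sum_Pow_neg2_power:
  assumes "finite S"
  shows "(\<Sum>I\<in>Pow S. (-2::complex) ^ card I) = (-1) ^ card S"
  using prod_add[OF assms, of "\<lambda>_. -2::complex" "\<lambda>_. 1"] by simp

lemma sum_Pow_subset_neg2_power:
  assumes "finite K"
  shows "(\<Sum>I\<in>Pow K. if I \<subseteq> X then (-2::complex) ^ card I else 0) = (-1) ^ card (K \<inter> X)"
proof -
  have "(\<Sum>I\<in>Pow K. if I \<subseteq> X then (-2::complex) ^ card I else 0) = (\<Sum>I\<in>Pow K \<inter> Pow X. (-2) ^ card I)"
    using sum.inter_restrict[of "Pow K" "\<lambda>I. (-2::complex) ^ card I" "Pow X"] assms by simp
  then show ?thesis
    using assms by (simp add: sum_Pow_neg2_power flip: Pow_Int_eq)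
qed

lemma sum_Pow_sign_product:
  assumes "finite C"
  shows "(\<Sum>K\<in>Pow C. (-1::complex) ^ card (K \<inter> A) * (-1) ^ card (K \<inter> B)) =
    (if A \<inter> C = B \<inter> C then 2 ^ card C else 0)"
proof -
  define f where "f x = (if x \<in> A then -1 else 1::complex) * (if x \<in> B then -1 else 1)" for x
  have "(\<Prod>x\<in>K. f x) = (-1::complex) ^ card (K \<inter> A) * (-1) ^ card (K \<inter> B)" if "K \<subseteq> C" for K
    using that finite_subset[OF that assms]
    by (simp add: f_def prod.distrib prod.If_cases Int_def)
  then have "(\<Sum>K\<in>Pow C. (-1::complex) ^ card (K \<inter> A) * (-1) ^ card (K \<inter> B)) = (\<Prod>x\<in>C. f x + 1)"
    using prod_add[OF assms, of f "\<lambda>_. 1"] by (simp add: add.commute)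
  also have "\<dots> = (if A \<inter> C = B \<inter> C then 2 ^ card C else 0)"
  proof (cases "A \<inter> C = B \<inter> C")
    case True
    then have "f x + 1 = 2" if "x \<in> C" for x
      using that by (auto simp: f_def)
    then show ?thesis
      using True by simp
  next
    case False
    then obtain x where "x \<in> C" "(x \<in> A) \<noteq> (x \<in> B)"
      by blast
    then have "x \<in> C" "f x + 1 = 0"
      by (auto simp: f_def)
    then show ?thesis
      using False assms by (auto simp: prod_zero)
  qed
  finally show ?thesis .
qed

lemma sum_Pow_sign:
  assumes "finite C"
  shows "(\<Sum>W\<in>Pow C. (-1::complex) ^ card (W \<inter> K)) = (if K \<inter> C = {} then 2 ^ card C else 0)"
  using sum_Pow_sign_product[OF assms, of K "{}"] by simp

lemma sum_supsets_reindex: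
  assumes "L \<subseteq> C"
  shows "sum g {X \<in> Pow C. L \<subseteq> X} = (\<Sum>W\<in>Pow (C - L). g (L \<union> W))"
proof -
  have "bij_betw (\<lambda>W. L \<union> W) (Pow (C - L)) {X \<in> Pow C. L \<subseteq> X}"
    by (rule bij_betw_byWitness[where f' = "\<lambda>X. X - L"]) (use assms in auto)
  then show ?thesis
    by (simp add: sum.reindex_bij_betw)
qed

lemma sum_supsets_sign:
  assumes "finite C" and "L \<subseteq> C"
  shows "(\<Sum>Z\<in>Pow C. if L \<subseteq> Z then (-1::complex) ^ card (K \<inter> Z) else 0) =
    (-1) ^ card (K \<inter> L) * (if K \<inter> (C - L) = {} then 2 ^ card (C - L) else 0)"
proof -
  have "(\<Sum>Z\<in>Pow C. if L \<subseteq> Z then (-1::complex) ^ card (K \<inter> Z) else 0) =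
      (\<Sum>Z\<in>{Z \<in> Pow C. L \<subseteq> Z}. (-1) ^ card (K \<inter> Z))"
    using assms(1) by (intro sum.inter_filter[symmetric]) simp
  also have "\<dots> = (\<Sum>W\<in>Pow (C - L). (-1) ^ card (K \<inter> (L \<union> W)))"
    by (rule sum_supsets_reindex[OF assms(2)])
  also have "\<dots> = (\<Sum>W\<in>Pow (C - L). (-1) ^ card (K \<inter> L) * (-1) ^ card (W \<inter> K))"
  proof (intro sum.cong refl)
    fix W assume W: "W \<in> Pow (C - L)"
    then have "K \<inter> (L \<union> W) = (K \<inter> L) \<union> (W \<inter> K)" "(K \<inter> L) \<inter> (W \<inter> K) = {}"
      by auto
    moreover have "finite (K \<inter> L)" "finite (W \<inter> K)"
      using finite_subset[OF assms(2,1)] finite_subset[of W C] W assms(1) by auto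
    ultimately show "(-1::complex) ^ card (K \<inter> (L \<union> W)) =
        (-1) ^ card (K \<inter> L) * (-1) ^ card (W \<inter> K)"
      by (simp add: card_Un_disjoint power_add)
  qed
  also have "\<dots> = (-1) ^ card (K \<inter> L) * (if K \<inter> (C - L) = {} then 2 ^ card (C - L) else 0)"
    using assms(1) by (simp add: sum_distrib_left[symmetric] sum_Pow_sign)
  finally show ?thesis .
qed

section \<open>Matrix elements of c_{A,B}, b_K and b_K c_{I,J}\<close>

lemma cc_apply:
  "cc n A B X Y =
    (if A \<subseteq> Nn n \<and> B \<subseteq> Nn n \<and> X \<subseteq> Nn n \<and> Y \<subseteq> Nn n \<and> A \<subseteq> X \<and> B \<subseteq> Y \<and> X - A = Y - B
     then wsign A (X - A) * wsign B (X - A) else 0)" (is "_ = ?g")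
proof -
  have entry: "cstarA n A X Z * cnj (cstarA n B Y Z) = (if Z = X - A then ?g else 0)" for Z
    by (cases "Z = X - A") (auto simp: cstarA_def)
  have "cc n A B X Y = (\<Sum>Z\<in>Pow (Nn n). cstarA n A X Z * cnj (cstarA n B Y Z))"
    by (simp add: cc_def mmul_def)
  also have "\<dots> = ?g"
    unfolding entry by (auto simp: sum.delta')
  finally show ?thesis .
qed

lemma cc_nonzeroD:
  assumes "cc n A B X Y \<noteq> 0"
  shows "A \<subseteq> X" "B \<subseteq> Y" "X - A = Y - B" "X - Y = A - B" "Y - X = B - A"
    "A \<subseteq> Nn n" "B \<subseteq> Nn n" "X \<subseteq> Nn n" "Y \<subseteq> Nn n"
  using assms by (auto simp: cc_apply split: if_splits)

lemma cc_real [simp]: "cnj (cc n A B X Y) = cc n A B X Y"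
  by (simp add: cc_apply)

lemma cc_in_L2: "cc n A B \<in> L2 n"
  by (auto simp: L2_iff cc_apply)

lemma cc_disjoint_apply:
  assumes "I \<subseteq> Nn n" "J \<subseteq> Nn n" "I \<inter> J = {}" "X \<subseteq> Nn n"
  shows "cc n I J X Y =
    (if I \<subseteq> X \<and> X \<inter> J = {} \<and> Y = J \<union> (X - I) then wsign I (X - I) * wsign J (X - I) else 0)"
proof -
  have "(Y \<subseteq> Nn n \<and> I \<subseteq> X \<and> J \<subseteq> Y \<and> X - I = Y - J) \<longleftrightarrow> (I \<subseteq> X \<and> X \<inter> J = {} \<and> Y = J \<union> (X - I))"
    using assms by blast
  then show ?thesis
    using assms by (simp add: cc_apply)
qed

lemma cc_apply_shift:
  assumes "I \<subseteq> Nn n" "J \<subseteq> Nn n" "I \<inter> J = {}" "Z \<subseteq> Nn n - (I \<union> J)"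
  shows "cc n I J (I \<union> Z) (J \<union> Z) = wsign I Z * wsign J Z"
proof -
  have "(I \<union> Z) - I = Z" "I \<union> Z \<subseteq> Nn n" "(I \<union> Z) \<inter> J = {}"
    using assms by auto
  then show ?thesis
    using assms by (simp add: cc_disjoint_apply)
qed

lemma cc_Un_common:
  assumes LI: "L \<inter> I = {}" and LJ: "L \<inter> J = {}"
  shows "cc n (I \<union> L) (J \<union> L) X Y = (if L \<subseteq> X then wsign I L * wsign J L * cc n I J X Y else 0)"
proof (cases "L \<subseteq> X")
  case False
  then show ?thesis
    using cc_nonzeroD(1)[of n "I \<union> L" "J \<union> L" X Y] by auto
next
  case True
  show ?thesis
  proof (cases "cc n I J X Y = 0")
    case zero: True
    show ?thesis
    proof (rule ccontr)
      assume "\<not> ?thesis"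
      then have "cc n (I \<union> L) (J \<union> L) X Y \<noteq> 0"
        using zero True by simp
      note h = cc_nonzeroD[OF this]
      have "X - I = Y - J"
        using h(1-3) LI LJ by blast
      then have "cc n I J X Y \<noteq> 0"
        using h(1,2,6-9) by (simp add: cc_apply wsign_nonzero)
      then show False
        using zero by simp
    qed
  next
    case False
    note h = cc_nonzeroD[OF False]
    define Z where "Z = X - I"
    have fin: "finite I" "finite J" "finite Z"
      using h(6-8) finite_subset[OF _ finite_Nn] unfolding Z_def by blast+
    have LZ: "L \<subseteq> Z"
      using True LI by (auto simp: Z_def)
    have "I \<union> L \<subseteq> X" "J \<union> L \<subseteq> Y" "X - (I \<union> L) = Z - L" "Y - (J \<union> L) = Z - L"
      "L \<subseteq> Nn n"
      using True LZ h(1-3,8) by (auto simp: Z_def)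
    then have "cc n (I \<union> L) (J \<union> L) X Y = wsign (I \<union> L) (Z - L) * wsign (J \<union> L) (Z - L)"
      using h(6-9) by (simp add: cc_apply)
    also have "\<dots> = wsign I L * wsign J L * (wsign I Z * wsign J Z)"
      using wsign_shift[OF fin(1,3) LZ LI] wsign_shift[OF fin(2,3) LZ LJ] by (simp add: algebra_simps)
    also have "wsign I Z * wsign J Z = cc n I J X Y"
      using h by (simp add: cc_apply Z_def)
    finally show ?thesis
      using True by simp
  qed
qed

lemma nA_apply:
  assumes "I \<subseteq> Nn n"
  shows "nA n I X Y = (if X \<subseteq> Nn n \<and> Y = X \<and> I \<subseteq> X then 1 else 0)"
  using assms by (simp add: nA_def cc_apply) blast

lemma bK_apply:
  assumes "K \<subseteq> Nn n"
  shows "bK n K X Y = (if X \<subseteq> Nn n \<and> Y = X then (-1) ^ card (K \<inter> X) else 0)"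
proof -
  have sum: "bK n K X Y = (\<Sum>I\<in>Pow K. (-2) ^ card I * nA n I X Y)"
    by (simp add: bK_def sum_fun_apply)
  show ?thesis
  proof (cases "X \<subseteq> Nn n \<and> Y = X")
    case True
    then have "bK n K X Y = (\<Sum>I\<in>Pow K. if I \<subseteq> X then (-2) ^ card I else 0)"
      unfolding sum using assms by (intro sum.cong refl) (auto simp: nA_apply)
    then show ?thesis
      using True finite_subset[OF assms finite_Nn] by (simp add: sum_Pow_subset_neg2_power)
  next
    case False
    then show ?thesis
      unfolding sum using assms by (auto simp: nA_apply intro!: sum.neutral)
  qed
qed

lemma bK_in_L2: "bK n K \<in> L2 n"
  unfolding bK_def nA_def
  by (intro cmod.subspace_sum[OF L2_subspace] cmod.subspace_scale[OF L2_subspace] cc_in_L2)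

definition bcc :: "nat \<Rightarrow> nat set \<Rightarrow> nat set \<Rightarrow> nat set \<Rightarrow> fop" where
  "bcc n K I J = mmul n (bK n K) (cc n I J)"

lemma bcc_apply:
  assumes "K \<subseteq> Nn n"
  shows "bcc n K I J X Y = (-1) ^ card (K \<inter> X) * cc n I J X Y"
proof -
  have "bcc n K I J X Y = (\<Sum>Z\<in>Pow (Nn n). if Z = X then (-1) ^ card (K \<inter> X) * cc n I J X Y else 0)"
    unfolding bcc_def mmul_def by (intro sum.cong) (auto simp: bK_apply[OF assms])
  also have "\<dots> = (-1) ^ card (K \<inter> X) * cc n I J X Y"
  proof (cases "X \<subseteq> Nn n")
    case False
    then have "cc n I J X Y = 0"
      using cc_nonzeroD(8) by blast
    then show ?thesis
      by simp
  qed (simp add: sum.delta')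
  finally show ?thesis .
qed

lemma bcc_in_L2: "bcc n K I J \<in> L2 n"
  by (simp add: bcc_def mmul_in_L2 bK_in_L2 cc_in_L2)

lemma bK_eq_bcc: "K \<subseteq> Nn n \<Longrightarrow> bK n K = bcc n K {} {}"
  by (auto simp: fun_eq_iff bK_apply bcc_apply cc_apply)

lemma mdisj_sym: "mdisj n K I J \<Longrightarrow> mdisj n K J I"
  by (auto simp: mdisj_def)

lemma mdisj_empty: "K \<subseteq> Nn n \<Longrightarrow> mdisj n K {} {}"
  by (simp add: mdisj_def)

lemma adj_bcc:
  assumes "mdisj n K I J"
  shows "adj (bcc n K I J) = bcc n K J I"
proof (intro ext)
  fix X Y
  have K: "K \<subseteq> Nn n"
    using assms by (simp add: mdisj_def)
  have swap: "cc n I J Y X = cc n J I X Y"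
    by (auto simp: cc_apply mult.commute)
  show "adj (bcc n K I J) X Y = bcc n K J I X Y"
  proof (cases "cc n J I X Y = 0")
    case False
    then have "J \<subseteq> X" "I \<subseteq> Y" "X - J = Y - I"
      by (auto dest: cc_nonzeroD)
    then have "K \<inter> X = K \<inter> Y"
      using assms by (auto simp: mdisj_def)
    then show ?thesis
      by (simp add: bcc_apply[OF K] swap)
  qed (simp add: bcc_apply[OF K] swap)
qed

lemma bcc_expansion:
  assumes "mdisj n K I J"
  shows "bcc n K I J = (\<Sum>L\<in>Pow K. smul ((-2) ^ card L * (wsign I L * wsign J L)) (cc n (I \<union> L) (J \<union> L)))"
proof (intro ext)
  fix X Y
  have K: "K \<subseteq> Nn n"
    using assms by (simp add: mdisj_def)
  have "(\<Sum>L\<in>Pow K. smul ((-2) ^ card L * (wsign I L * wsign J L)) (cc n (I \<union> L) (J \<union> L))) X Y =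
      (\<Sum>L\<in>Pow K. if L \<subseteq> X then (-2) ^ card L else 0) * cc n I J X Y"
    unfolding sum_fun_apply sum_distrib_right
  proof (intro sum.cong refl)
    fix L assume "L \<in> Pow K"
    then have "L \<inter> I = {}" "L \<inter> J = {}"
      using assms by (auto simp: mdisj_def)
    then show "smul ((-2) ^ card L * (wsign I L * wsign J L)) (cc n (I \<union> L) (J \<union> L)) X Y =
        (if L \<subseteq> X then (-2) ^ card L else 0) * cc n I J X Y"
      by (simp add: cc_Un_common algebra_simps)
  qed
  also have "\<dots> = bcc n K I J X Y"
    using finite_subset[OF K finite_Nn] by (simp add: sum_Pow_subset_neg2_power bcc_apply[OF K])
  finally show "bcc n K I J X Y =
      (\<Sum>L\<in>Pow K. smul ((-2) ^ card L * (wsign I L * wsign J L)) (cc n (I \<union> L) (J \<union> L))) X Y" ..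
qed

lemma hs_inner_bcc:
  assumes "mdisj n K I J"
  shows "hs_inner n (bcc n K I J) M =
    (\<Sum>Z\<in>Pow (Nn n - (I \<union> J)). (-1) ^ card (K \<inter> Z) * (wsign I Z * wsign J Z) * M (I \<union> Z) (J \<union> Z))"
proof -
  have K: "K \<subseteq> Nn n" and I: "I \<subseteq> Nn n" and J: "J \<subseteq> Nn n" and IJ: "I \<inter> J = {}"
    and KI: "K \<inter> I = {}"
    using assms by (auto simp: mdisj_def)
  define g where "g X = (-1) ^ card (K \<inter> X) * (wsign I (X - I) * wsign J (X - I)) * M X (J \<union> (X - I))"
    for X
  have row: "(\<Sum>Y\<in>Pow (Nn n). cnj (bcc n K I J X Y) * M X Y) = (if I \<subseteq> X \<and> X \<inter> J = {} then g X else 0)"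
    if "X \<subseteq> Nn n" for X
  proof -
    have "(\<Sum>Y\<in>Pow (Nn n). cnj (bcc n K I J X Y) * M X Y) =
        (\<Sum>Y\<in>Pow (Nn n). if Y = J \<union> (X - I) then (if I \<subseteq> X \<and> X \<inter> J = {} then g X else 0) else 0)"
      using that by (intro sum.cong) (auto simp: bcc_apply[OF K] cc_disjoint_apply[OF I J IJ] g_def)
    then show ?thesis
      using that J by (auto simp: sum.delta')
  qed
  have "hs_inner n (bcc n K I J) M = (\<Sum>X\<in>Pow (Nn n). if I \<subseteq> X \<and> X \<inter> J = {} then g X else 0)"
    unfolding hs_inner_def using row by (intro sum.cong) auto
  also have "\<dots> = sum g {X \<in> Pow (Nn n). I \<subseteq> X \<and> X \<inter> J = {}}"
    by (intro sum.inter_filter[symmetric]) simp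
  also have "\<dots> = sum g {X \<in> Pow (Nn n - J). I \<subseteq> X}"
    by (rule arg_cong[where f = "sum g"]) auto
  also have "\<dots> = (\<Sum>Z\<in>Pow (Nn n - J - I). g (I \<union> Z))"
    using I IJ by (intro sum_supsets_reindex) auto
  also have "\<dots> = (\<Sum>Z\<in>Pow (Nn n - (I \<union> J)). (-1) ^ card (K \<inter> Z) * (wsign I Z * wsign J Z) * M (I \<union> Z) (J \<union> Z))"
  proof (intro sum.cong)
    fix Z assume "Z \<in> Pow (Nn n - (I \<union> J))"
    then have "(I \<union> Z) - I = Z" "K \<inter> (I \<union> Z) = K \<inter> Z"
      using KI by auto
    then show "g (I \<union> Z) = (-1) ^ card (K \<inter> Z) * (wsign I Z * wsign J Z) * M (I \<union> Z) (J \<union> Z)"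
      by (simp add: g_def)
  qed auto
  finally show ?thesis .
qed

lemma hs_inner_bcc_bcc:
  assumes "mdisj n K I J" and "mdisj n K' I' J'"
  shows "hs_inner n (bcc n K I J) (bcc n K' I' J') =
    (if (K, I, J) = (K', I', J') then 2 ^ card (Nn n - (I \<union> J)) else 0)"
proof -
  have I: "I \<subseteq> Nn n" and J: "J \<subseteq> Nn n" and IJ: "I \<inter> J = {}"
    and K': "K' \<subseteq> Nn n" and I'J': "I' \<inter> J' = {}" and "K' \<inter> I' = {}" "K' \<inter> J' = {}"
    using assms by (auto simp: mdisj_def)
  let ?C = "Nn n - (I \<union> J)"
  show ?thesis
  proof (cases "(I', J') = (I, J)")
    case False
    have "cc n I' J' (I \<union> Z) (J \<union> Z) = 0" if "Z \<subseteq> ?C" for Z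
    proof (rule ccontr)
      assume "cc n I' J' (I \<union> Z) (J \<union> Z) \<noteq> 0"
      then have "I' - J' = (I \<union> Z) - (J \<union> Z)" "J' - I' = (J \<union> Z) - (I \<union> Z)"
        by (auto dest: cc_nonzeroD)
      then show False
        using that IJ I'J' False by auto
    qed
    then show ?thesis
      using False by (auto simp: hs_inner_bcc[OF assms(1)] bcc_apply[OF K'] intro!: sum.neutral)
  next
    case True
    then have [simp]: "I' = I" "J' = J" by auto
    have "hs_inner n (bcc n K I J) (bcc n K' I' J') = (\<Sum>Z\<in>Pow ?C. (-1) ^ card (Z \<inter> K) * (-1) ^ card (Z \<inter> K'))"
    proof (unfold hs_inner_bcc[OF assms(1)], intro sum.cong)
      fix Z assume "Z \<in> Pow ?C"
      moreover have "K' \<inter> (I \<union> Z) = K' \<inter> Z"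
        using \<open>K' \<inter> I' = {}\<close> by auto
      ultimately show "(-1) ^ card (K \<inter> Z) * (wsign I Z * wsign J Z) * bcc n K' I' J' (I \<union> Z) (J \<union> Z) =
          (-1) ^ card (Z \<inter> K) * (-1) ^ card (Z \<inter> K')"
        by (simp add: bcc_apply[OF K'] cc_apply_shift[OF I J IJ] Int_commute algebra_simps)
    qed auto
    also have "\<dots> = (if K \<inter> ?C = K' \<inter> ?C then 2 ^ card ?C else 0)"
      by (simp add: sum_Pow_sign_product)
    finally show ?thesis
      using assms by (auto simp: mdisj_def Int_absorb2)
  qed
qed

lemma hs_inner_bcc_cc:
  assumes md: "mdisj n K I J" and L: "L \<subseteq> Nn n - (I \<union> J)"
  shows "hs_inner n (bcc n K I J) (cc n (I \<union> L) (J \<union> L)) =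
    wsign I L * wsign J L * (-1) ^ card (K \<inter> L) * (if K \<subseteq> L then 2 ^ card (Nn n - (I \<union> J) - L) else 0)"
proof -
  let ?C = "Nn n - (I \<union> J)"
  have I: "I \<subseteq> Nn n" and J: "J \<subseteq> Nn n" and IJ: "I \<inter> J = {}" and KC: "K \<subseteq> ?C"
    using md by (auto simp: mdisj_def)
  have LI: "L \<inter> I = {}" and LJ: "L \<inter> J = {}"
    using L by auto
  have "hs_inner n (bcc n K I J) (cc n (I \<union> L) (J \<union> L)) =
      (\<Sum>Z\<in>Pow ?C. wsign I L * wsign J L * (if L \<subseteq> Z then (-1) ^ card (K \<inter> Z) else 0))"
    unfolding hs_inner_bcc[OF md]
  proof (intro sum.cong refl)
    fix Z assume "Z \<in> Pow ?C"
    then have Z: "Z \<subseteq> ?C" and "L \<subseteq> I \<union> Z \<longleftrightarrow> L \<subseteq> Z"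
      using LI by auto
    then show "(-1) ^ card (K \<inter> Z) * (wsign I Z * wsign J Z) * cc n (I \<union> L) (J \<union> L) (I \<union> Z) (J \<union> Z) =
        wsign I L * wsign J L * (if L \<subseteq> Z then (-1) ^ card (K \<inter> Z) else 0)"
      by (simp add: cc_Un_common[OF LI LJ] cc_apply_shift[OF I J IJ Z] algebra_simps)
  qed
  also have "\<dots> = wsign I L * wsign J L * (-1) ^ card (K \<inter> L) * (if K \<inter> (?C - L) = {} then 2 ^ card (?C - L) else 0)"
    using L by (simp add: sum_distrib_left[symmetric] sum_supsets_sign)
  also have "K \<inter> (?C - L) = {} \<longleftrightarrow> K \<subseteq> L"
    using KC by auto
  finally show ?thesis .
qed

lemma hs_inner_bcc_cc_eq_0:
  assumes md: "mdisj n K I J"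
    and no_shift: "\<not> (\<exists>L. K \<subseteq> L \<and> A = I \<union> L \<and> B = J \<union> L \<and> L \<inter> (I \<union> J) = {})"
  shows "hs_inner n (bcc n K I J) (cc n A B) = 0"
proof (cases "A - B = I \<and> B - A = J \<and> A \<subseteq> Nn n \<and> B \<subseteq> Nn n")
  case True
  define L where "L = A \<inter> B"
  have AB: "A = I \<union> L" "B = J \<union> L" and L: "L \<inter> (I \<union> J) = {}" "L \<subseteq> Nn n - (I \<union> J)"
    using True by (auto simp: L_def)
  then have "\<not> K \<subseteq> L"
    using no_shift by blast
  then have "hs_inner n (bcc n K I J) (cc n (I \<union> L) (J \<union> L)) = 0"
    by (simp add: hs_inner_bcc_cc[OF md L(2)])
  then show ?thesis
    by (simp add: AB)
next
  case False
  have IJ: "I \<inter> J = {}"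
    using md by (simp add: mdisj_def)
  have "cc n A B (I \<union> Z) (J \<union> Z) = 0" if "Z \<subseteq> Nn n - (I \<union> J)" for Z
  proof (rule ccontr)
    assume "cc n A B (I \<union> Z) (J \<union> Z) \<noteq> 0"
    note h = cc_nonzeroD[OF this]
    have "(I \<union> Z) - (J \<union> Z) = I" "(J \<union> Z) - (I \<union> Z) = J"
      using that IJ by auto
    then show False
      using False h(4,5,6,7) by simp
  qed
  then show ?thesis
    by (simp add: hs_inner_bcc[OF md])
qed

section \<open>The family B^R\<close>

lemma
  assumes "strict_linear_order_on A R" and "(I, J) \<in> R"
  shows strict_linear_order_on_neq: "I \<noteq> J"
    and strict_linear_order_on_asym: "(J, I) \<notin> R"
  using assms by (auto simp: strict_linear_order_on_def irrefl_def dest: transD)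

definition inv_sqrt2_pow :: "nat \<Rightarrow> complex" where
  "inv_sqrt2_pow m = complex_of_real (1 / sqrt (2 ^ m))"

lemma inv_sqrt2_pow_real [simp]: "cnj (inv_sqrt2_pow m) = inv_sqrt2_pow m"
  by (simp add: inv_sqrt2_pow_def)

lemma inv_sqrt2_pow_nonzero [simp]: "inv_sqrt2_pow m \<noteq> 0"
  by (simp add: inv_sqrt2_pow_def)

lemma inv_sqrt2_pow_square: "inv_sqrt2_pow m * (inv_sqrt2_pow m * 2 ^ m) = 1"
proof -
  have "1 / sqrt (2 ^ m) * (1 / sqrt (2 ^ m) * 2 ^ m) = (1::real)"
    by simp
  then have "complex_of_real (1 / sqrt (2 ^ m) * (1 / sqrt (2 ^ m) * 2 ^ m)) = 1"
    by simp
  then show ?thesis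
    unfolding inv_sqrt2_pow_def of_real_mult of_real_power of_real_numeral .
qed

lemma bvec_BD_eq: "K \<subseteq> Nn n \<Longrightarrow> bvec n (BD K) = smul (inv_sqrt2_pow n) (bcc n K {} {})"
  by (simp add: inv_sqrt2_pow_def bK_eq_bcc)

lemma bvec_BRe_eq:
  "bvec n (BRe K I J) = smul (inv_sqrt2_pow (n + 1 - card (I \<union> J))) (bcc n K I J + bcc n K J I)"
  by (simp add: inv_sqrt2_pow_def bcc_def mmul_add_right)

lemma bvec_BIm_eq:
  "bvec n (BIm K I J) = smul (- \<i> * inv_sqrt2_pow (n + 1 - card (I \<union> J))) (bcc n K I J - bcc n K J I)"
  by (simp add: inv_sqrt2_pow_def bcc_def mmul_diff_right)

declare bvec.simps [simp del]

lemma Bidx_cases [consumes 1, case_names BD BRe BIm]: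
  assumes "i \<in> Bidx n R"
  obtains K where "i = BD K" "K \<subseteq> Nn n"
    | K I J where "i = BRe K I J" "mdisj n K I J" "(I, J) \<in> R"
    | K I J where "i = BIm K I J" "mdisj n K I J" "(I, J) \<in> R"
  using assms by (auto simp: Bidx_def)

lemma finite_Bidx: "finite (Bidx n R)"
proof -
  let ?P = "Pow (Nn n)"
  have "Bidx n R \<subseteq> BD ` ?P \<union> (\<lambda>(K, I, J). BRe K I J) ` (?P \<times> ?P \<times> ?P)
      \<union> (\<lambda>(K, I, J). BIm K I J) ` (?P \<times> ?P \<times> ?P)"
    by (auto simp: Bidx_def mdisj_def image_iff)
  then show ?thesis
    by (rule finite_subset) auto
qed

lemma bvec_self_adjoint:
  assumes "i \<in> Bidx n R"
  shows "adj (bvec n i) = bvec n i"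
  using assms
proof (cases rule: Bidx_cases)
  case (BD K)
  then show ?thesis
    by (simp add: bvec_BD_eq adj_bcc mdisj_empty)
next
  case (BRe K I J)
  then show ?thesis
    by (simp add: bvec_BRe_eq adj_bcc mdisj_sym add.commute)
next
  case (BIm K I J)
  then show ?thesis
    by (simp add: bvec_BIm_eq adj_bcc mdisj_sym fun_eq_iff algebra_simps)
qed

lemma bvec_in_L2: "bvec n i \<in> L2 n"
proof (cases i)
  case (BD K)
  then show ?thesis
    by (simp add: bvec.simps bK_in_L2 cmod.subspace_scale[OF L2_subspace])
next
  case (BRe K I J)
  then show ?thesis
    unfolding BRe bvec_BRe_eq
    by (intro cmod.subspace_scale[OF L2_subspace] cmod.subspace_add[OF L2_subspace] bcc_in_L2)
next
  case (BIm K I J)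
  then show ?thesis
    unfolding BIm bvec_BIm_eq
    by (intro cmod.subspace_scale[OF L2_subspace] cmod.subspace_diff[OF L2_subspace] bcc_in_L2)
qed

lemma bvec_pair_norm:
  assumes "mdisj n K I J"
  shows "inv_sqrt2_pow (n + 1 - card (I \<union> J)) *
    (inv_sqrt2_pow (n + 1 - card (I \<union> J)) * (2 * 2 ^ card (Nn n - (I \<union> J)))) = 1"
proof -
  have "I \<union> J \<subseteq> Nn n"
    using assms by (simp add: mdisj_def)
  then have "card (I \<union> J) \<le> n" "card (Nn n - (I \<union> J)) = n - card (I \<union> J)"
    using card_mono[OF finite_Nn] by (auto simp: card_Diff_subset finite_subset)
  then have "n + 1 - card (I \<union> J) = Suc (card (Nn n - (I \<union> J)))"
    by simp
  then show ?thesis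
    using inv_sqrt2_pow_square[of "n + 1 - card (I \<union> J)"] by simp
qed

lemma bcc_pair_inner:
  assumes "mdisj n K I J" and "I \<noteq> J"
  shows "hs_inner n (bcc n K I J) (bcc n K I J) = 2 ^ card (Nn n - (I \<union> J))"
    and "hs_inner n (bcc n K J I) (bcc n K J I) = 2 ^ card (Nn n - (I \<union> J))"
    and "hs_inner n (bcc n K I J) (bcc n K J I) = 0"
  using assms by (simp_all add: hs_inner_bcc_bcc mdisj_sym Un_commute)

fun bkey :: "bidx \<Rightarrow> nat set \<times> nat set \<times> nat set" where
  "bkey (BD K) = (K, {}, {})"
| "bkey (BRe K I J) = (K, I, J)"
| "bkey (BIm K I J) = (K, I, J)"

lemma bkey_mdisj:
  assumes "i \<in> Bidx n R" and "bkey i = (K, I, J)"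
  shows "mdisj n K I J"
  using assms by (cases rule: Bidx_cases) (auto simp: mdisj_empty)

lemma bvec_in_span_bkey:
  assumes "i \<in> Bidx n R" and "bkey i = (K, I, J)"
  shows "bvec n i \<in> cmod.span {bcc n K I J, bcc n K J I}"
  using assms
  by (cases rule: Bidx_cases)
    (auto simp: bvec_BD_eq bvec_BRe_eq bvec_BIm_eq cmod.span_base
      intro!: cmod.span_scale cmod.span_add cmod.span_diff cmod.span_neg)

lemma bkey_swap:
  assumes R: "strict_linear_order_on (Pow (Nn n)) R" and i: "i \<in> Bidx n R" and j: "j \<in> Bidx n R"
    and ki: "bkey i = (K, I, J)" and kj: "bkey j = (K, J, I)"
  shows "I = {} \<and> J = {}"
  using i
proof (cases rule: Bidx_cases)
  case (BRe K0 I0 J0)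
  from j show ?thesis
    by (cases rule: Bidx_cases)
      (use BRe ki kj strict_linear_order_on_asym[OF R] in auto)
next
  case (BIm K0 I0 J0)
  from j show ?thesis
    by (cases rule: Bidx_cases)
      (use BIm ki kj strict_linear_order_on_asym[OF R] in auto)
qed (use ki in auto)

lemma bvec_orthogonal_keys:
  assumes R: "strict_linear_order_on (Pow (Nn n)) R" and i: "i \<in> Bidx n R" and j: "j \<in> Bidx n R"
    and key: "bkey i \<noteq> bkey j"
  shows "hs_inner n (bvec n i) (bvec n j) = 0"
proof -
  obtain K I J K' I' J' where ki: "bkey i = (K, I, J)" and kj: "bkey j = (K', I', J')"
    by (metis prod_cases3)
  have "hs_inner n (bcc n K a b) (bcc n K' c d) = 0"
    if ab: "(a, b) \<in> {(I, J), (J, I)}" and cd: "(c, d) \<in> {(I', J'), (J', I')}" for a b c d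
  proof -
    have "mdisj n K a b" "mdisj n K' c d"
      using ab cd bkey_mdisj[OF i ki] bkey_mdisj[OF j kj] mdisj_sym by auto
    moreover have "(K, a, b) \<noteq> (K', c, d)"
    proof
      assume "(K, a, b) = (K', c, d)"
      then have "K' = K" "(I', J') = (I, J) \<or> (I', J') = (J, I)"
        using ab cd by auto
      then show False
        using bkey_swap[OF R i j ki] ki kj key by auto
    qed
    ultimately show ?thesis
      by (simp add: hs_inner_bcc_bcc)
  qed
  then have "hs_inner n g h = 0" if "g \<in> {bcc n K I J, bcc n K J I}" "h \<in> {bcc n K' I' J', bcc n K' J' I'}"
    for g h
    using that by blast
  then show ?thesis
    using bvec_in_span_bkey[OF i ki] bvec_in_span_bkey[OF j kj] by (rule hs_inner_span_orthogonal)
qed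

lemma bvec_orthonormal_same_key:
  assumes R: "strict_linear_order_on (Pow (Nn n)) R" and i: "i \<in> Bidx n R" and j: "j \<in> Bidx n R"
    and key: "bkey i = bkey j"
  shows "hs_inner n (bvec n i) (bvec n j) = (if i = j then 1 else 0)"
  using i
proof (cases rule: Bidx_cases)
  case (BD K)
  from j key have "j = i"
    by (cases rule: Bidx_cases) (use BD strict_linear_order_on_neq[OF R] in auto)
  then show ?thesis
    using BD inv_sqrt2_pow_square by (simp add: bvec_BD_eq hs_inner_bcc_bcc mdisj_empty)
next
  case (BRe K I J)
  note pair = hs_inner_pair[OF bcc_pair_inner[OF BRe(2) strict_linear_order_on_neq[OF R BRe(3)]]
      inv_sqrt2_pow_real bvec_pair_norm[OF BRe(2)]]
  from j key consider "j = BRe K I J" | "j = BIm K I J"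
    by (cases rule: Bidx_cases) (use BRe strict_linear_order_on_neq[OF R] in auto)
  then show ?thesis
    by cases (use pair in \<open>simp_all add: BRe bvec_BRe_eq bvec_BIm_eq\<close>)
next
  case (BIm K I J)
  note pair = hs_inner_pair[OF bcc_pair_inner[OF BIm(2) strict_linear_order_on_neq[OF R BIm(3)]]
      inv_sqrt2_pow_real bvec_pair_norm[OF BIm(2)]]
  from j key consider "j = BRe K I J" | "j = BIm K I J"
    by (cases rule: Bidx_cases) (use BIm strict_linear_order_on_neq[OF R] in auto)
  then show ?thesis
    by cases (use pair in \<open>simp_all add: BIm bvec_BRe_eq bvec_BIm_eq\<close>)
qed

lemma bvec_orthonormal:
  assumes "strict_linear_order_on (Pow (Nn n)) R"
  shows "orthonormal_fam n (Bidx n R) (bvec n)"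
  unfolding orthonormal_fam_def
proof (intro ballI)
  fix i j assume "i \<in> Bidx n R" "j \<in> Bidx n R"
  then show "hs_inner n (bvec n i) (bvec n j) = (if i = j then 1 else 0)"
    using bvec_orthogonal_keys[OF assms] bvec_orthonormal_same_key[OF assms]
    by (cases "bkey i = bkey j") auto
qed

lemma bcc_in_span_bvec:
  assumes R: "strict_linear_order_on (Pow (Nn n)) R" and md: "mdisj n K I J"
  shows "bcc n K I J \<in> cmod.span (bvec n ` Bidx n R)"
proof -
  have in_span: "bvec n i \<in> cmod.span (bvec n ` Bidx n R)" if "i \<in> Bidx n R" for i
    using that by (simp add: cmod.span_base)
  have K: "K \<subseteq> Nn n" and IJ: "I \<inter> J = {}"
    using md by (auto simp: mdisj_def)
  consider "I = J" | "(I, J) \<in> R" | "(J, I) \<in> R"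
    using R md by (auto simp: strict_linear_order_on_def total_on_def mdisj_def)
  then show ?thesis
  proof cases
    case 1
    then have "I = {}" "J = {}"
      using IJ by auto
    then have "bcc n K I J = smul (1 / inv_sqrt2_pow n) (bvec n (BD K))"
      using K by (simp add: bvec_BD_eq)
    moreover have "BD K \<in> Bidx n R"
      using K by (auto simp: Bidx_def)
    ultimately show ?thesis
      by (simp add: cmod.span_scale in_span)
  next
    case 2
    define c where "c = inv_sqrt2_pow (n + 1 - card (I \<union> J))"
    have mem: "BRe K I J \<in> Bidx n R" "BIm K I J \<in> Bidx n R"
      using 2 md by (auto simp: Bidx_def)
    have eq: "bcc n K I J =
        smul (1 / (2 * c)) (bvec n (BRe K I J)) + smul (\<i> / (2 * c)) (bvec n (BIm K I J))"
      unfolding bvec_BRe_eq bvec_BIm_eq c_def[symmetric] by (rule pair_recover(1)) (simp add: c_def)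
    show ?thesis
      unfolding eq by (intro cmod.span_add cmod.span_scale in_span mem)
  next
    case 3
    define c where "c = inv_sqrt2_pow (n + 1 - card (J \<union> I))"
    have mem: "BRe K J I \<in> Bidx n R" "BIm K J I \<in> Bidx n R"
      using 3 md by (auto simp: Bidx_def mdisj_def)
    have eq: "bcc n K I J =
        smul (1 / (2 * c)) (bvec n (BRe K J I)) + smul (- \<i> / (2 * c)) (bvec n (BIm K J I))"
      unfolding bvec_BRe_eq bvec_BIm_eq c_def[symmetric] by (rule pair_recover(2)) (simp add: c_def)
    show ?thesis
      unfolding eq by (intro cmod.span_add cmod.span_scale in_span mem)
  qed
qed

lemma munit_bcc_expansion:
  assumes X: "X \<subseteq> Nn n" and Y: "Y \<subseteq> Nn n"
  defines "I \<equiv> X - Y" and "J \<equiv> Y - X"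
  defines "C \<equiv> Nn n - (I \<union> J)"
  defines "s \<equiv> wsign I (X \<inter> Y) * wsign J (X \<inter> Y)"
  shows "munit X Y = (\<Sum>K\<in>Pow C. smul ((-1) ^ card (K \<inter> X) / (2 ^ card C * s)) (bcc n K I J))"
proof (intro ext)
  fix X' Y'
  have IJ: "I \<inter> J = {}" and XY: "X = I \<union> (X \<inter> Y)" "Y = J \<union> (X \<inter> Y)"
    by (auto simp: I_def J_def)
  have "I \<subseteq> Nn n" "J \<subseteq> Nn n" "I \<subseteq> X" "J \<subseteq> Y" "X - I = X \<inter> Y" "Y - J = X \<inter> Y"
    using X Y by (auto simp: I_def J_def)
  then have ccXY: "cc n I J X Y = s"
    using X Y by (simp add: cc_apply s_def)
  have XC: "X \<inter> C = X \<inter> Y"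
    using X by (auto simp: C_def I_def J_def)
  have same: "X' = X \<and> Y' = Y" if cc: "cc n I J X' Y' \<noteq> 0" and eq: "X' \<inter> C = X \<inter> C"
  proof -
    note h = cc_nonzeroD[OF cc]
    have "X' \<inter> C = X' - I"
      using h(3,8) IJ by (auto simp: C_def)
    then have "X' - I = X \<inter> Y"
      using eq XC by simp
    then have "X' = I \<union> (X \<inter> Y)" "Y' = J \<union> (X \<inter> Y)"
      using h(1,2,3) by blast+
    then show ?thesis
      using XY by simp
  qed
  have entry: "smul ((-1) ^ card (K \<inter> X) / (2 ^ card C * s)) (bcc n K I J) X' Y' =
      cc n I J X' Y' / (2 ^ card C * s) * ((-1) ^ card (K \<inter> X) * (-1) ^ card (K \<inter> X'))"
    if "K \<in> Pow C" for K
  proof -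
    have "K \<subseteq> Nn n"
      using that by (auto simp: C_def)
    then show ?thesis
      by (simp add: bcc_apply)
  qed
  have "(\<Sum>K\<in>Pow C. smul ((-1) ^ card (K \<inter> X) / (2 ^ card C * s)) (bcc n K I J)) X' Y' =
      cc n I J X' Y' / (2 ^ card C * s) * (\<Sum>K\<in>Pow C. (-1) ^ card (K \<inter> X) * (-1) ^ card (K \<inter> X'))"
    unfolding sum_fun_apply sum_distrib_left by (rule sum.cong[OF refl entry])
  also have "\<dots> = cc n I J X' Y' / (2 ^ card C * s) * (if X \<inter> C = X' \<inter> C then 2 ^ card C else 0)"
    by (simp add: sum_Pow_sign_product C_def)
  also have "\<dots> = munit X Y X' Y'"
  proof (cases "X' = X \<and> Y' = Y")
    case True
    have "s \<noteq> 0"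
      by (simp add: s_def wsign_nonzero)
    then show ?thesis
      using True ccXY by (simp add: munit_def)
  next
    case False
    then have "cc n I J X' Y' = 0 \<or> X \<inter> C \<noteq> X' \<inter> C"
      using same by metis
    then show ?thesis
      using False by (auto simp: munit_def)
  qed
  finally show "munit X Y X' Y' = (\<Sum>K\<in>Pow C. smul ((-1) ^ card (K \<inter> X) / (2 ^ card C * s)) (bcc n K I J)) X' Y'" ..
qed

lemma span_bvec_eq_L2:
  assumes R: "strict_linear_order_on (Pow (Nn n)) R"
  shows "cmod.span (bvec n ` Bidx n R) = L2 n"
proof
  show "cmod.span (bvec n ` Bidx n R) \<subseteq> L2 n"
    by (intro cmod.span_minimal L2_subspace) (auto simp: bvec_in_L2)
next
  have munit: "munit X Y \<in> cmod.span (bvec n ` Bidx n R)" if "X \<subseteq> Nn n" "Y \<subseteq> Nn n" for X Y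
    unfolding munit_bcc_expansion[OF that]
    by (intro cmod.span_sum cmod.span_scale bcc_in_span_bvec[OF R]) (use that in \<open>auto simp: mdisj_def\<close>)
  show "L2 n \<subseteq> cmod.span (bvec n ` Bidx n R)"
  proof
    fix M assume "M \<in> L2 n"
    then show "M \<in> cmod.span (bvec n ` Bidx n R)"
      by (subst L2_munit_expansion) (auto intro!: cmod.span_sum cmod.span_scale munit)
  qed
qed

section \<open>k-body operators\<close>

definition cc_deg :: "nat \<Rightarrow> nat \<Rightarrow> fop set" where
  "cc_deg n k = {cc n A B | A B l. A \<subseteq> Nn n \<and> B \<subseteq> Nn n \<and> card A + card B = 2 * l \<and> l \<le> k}"

lemma cstar_indicator:
  assumes "A \<subseteq> Nn n"
  shows "cstar n (\<lambda>X. if X = A then 1 else 0) = cstarA n A"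
proof -
  have "smul (if A' = A then 1 else 0) (cstarA n A') = (if A' = A then cstarA n A else 0)" for A'
    by simp
  then show ?thesis
    using assms by (simp add: cstar_def sum.delta')
qed

lemma generator_expansion:
  "mmul n (cstar n w) (cann n e) = (\<Sum>A\<in>Pow (Nn n). \<Sum>B\<in>Pow (Nn n). smul (w A * cnj (e B)) (cc n A B))"
proof (intro ext)
  fix X Y
  let ?P = "Pow (Nn n)"
  have "mmul n (cstar n w) (cann n e) X Y =
      (\<Sum>Z\<in>?P. \<Sum>A\<in>?P. \<Sum>B\<in>?P. w A * cnj (e B) * (cstarA n A X Z * cnj (cstarA n B Y Z)))"
    by (simp add: mmul_def cann_def cstar_def sum_fun_apply sum_product algebra_simps)
  also have "\<dots> = (\<Sum>A\<in>?P. \<Sum>B\<in>?P. \<Sum>Z\<in>?P. w A * cnj (e B) * (cstarA n A X Z * cnj (cstarA n B Y Z)))"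
    by (subst sum.swap) (intro sum.cong refl sum.swap)
  also have "\<dots> = (\<Sum>A\<in>?P. \<Sum>B\<in>?P. smul (w A * cnj (e B)) (cc n A B)) X Y"
    by (simp add: sum_fun_apply cc_def mmul_def sum_distrib_left)
  finally show "mmul n (cstar n w) (cann n e) X Y = (\<Sum>A\<in>?P. \<Sum>B\<in>?P. smul (w A * cnj (e B)) (cc n A B)) X Y" .
qed

lemma Ok_eq_span_cc_deg: "Ok n k = cmod.span (cc_deg n k)"
proof -
  let ?G = "{mmul n (cstar n w) (cann n e) | w e r s l.
    w \<in> wedge n r \<and> e \<in> wedge n s \<and> r + s = 2 * l \<and> l \<le> k}"
  have "cc_deg n k \<subseteq> ?G"
  proof
    fix g assume "g \<in> cc_deg n k"
    then obtain A B l where g: "g = cc n A B" "A \<subseteq> Nn n" "B \<subseteq> Nn n" "card A + card B = 2 * l" "l \<le> k"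
      by (auto simp: cc_deg_def)
    let ?w = "\<lambda>X. if X = A then 1 else 0" and ?e = "\<lambda>X. if X = B then 1 else 0"
    have "g = mmul n (cstar n ?w) (cann n ?e)"
      using g by (simp add: cc_def cann_def cstar_indicator)
    moreover have "?w \<in> wedge n (card A)" "?e \<in> wedge n (card B)"
      using g by (auto simp: wedge_def)
    ultimately show "g \<in> ?G"
      using g by blast
  qed
  moreover have "?G \<subseteq> cmod.span (cc_deg n k)"
  proof
    fix g assume "g \<in> ?G"
    then obtain w e r s l where g: "g = mmul n (cstar n w) (cann n e)" "w \<in> wedge n r" "e \<in> wedge n s"
      "r + s = 2 * l" "l \<le> k"
      by blast
    have "smul (w A * cnj (e B)) (cc n A B) \<in> cmod.span (cc_deg n k)" for A B
    proof (cases "w A = 0 \<or> e B = 0")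
      case False
      then have "A \<subseteq> Nn n" "B \<subseteq> Nn n" "card A + card B = 2 * l"
        using g by (auto simp: wedge_def)
      then have "cc n A B \<in> cc_deg n k"
        using g(5) by (auto simp: cc_deg_def)
      then show ?thesis
        by (simp add: cmod.span_base cmod.span_scale)
    qed (auto simp: cmod.span_zero)
    then show "g \<in> cmod.span (cc_deg n k)"
      unfolding g generator_expansion by (intro cmod.span_sum)
  qed
  ultimately have "cmod.span ?G = cmod.span (cc_deg n k)"
    by (intro antisym cmod.span_minimal cmod.span_mono) auto
  then show ?thesis
    by (simp add: Ok_def cspan_eq_span)
qed

lemma Ok_subset_L2: "Ok n k \<subseteq> L2 n"
  unfolding Ok_eq_span_cc_deg by (intro cmod.span_minimal L2_subspace) (auto simp: cc_deg_def cc_in_L2)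

lemma bcc_in_Ok:
  assumes md: "mdisj n K I J" and deg: "card I + card J + 2 * card K = 2 * l" and "l \<le> k"
  shows "bcc n K I J \<in> Ok n k"
proof -
  have "cc n (I \<union> L) (J \<union> L) \<in> cc_deg n k" if "L \<subseteq> K" for L
  proof -
    have "I \<subseteq> Nn n" "J \<subseteq> Nn n" "K \<subseteq> Nn n" "L \<subseteq> Nn n"
      using md that by (auto simp: mdisj_def)
    then have fin: "finite I" "finite J" "finite L" "finite K"
      by (meson finite_Nn finite_subset)+
    have "I \<inter> L = {}" "J \<inter> L = {}"
      using md that by (auto simp: mdisj_def)
    then have "card (I \<union> L) = card I + card L" "card (J \<union> L) = card J + card L" "card L \<le> card K"
      using that fin by (simp_all add: card_Un_disjoint card_mono)
    then have "card (I \<union> L) + card (J \<union> L) = 2 * (l - card K + card L) \<and> l - card K + card L \<le> k"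
      using deg \<open>l \<le> k\<close> by arith
    moreover have "I \<union> L \<subseteq> Nn n" "J \<union> L \<subseteq> Nn n"
      using md that by (auto simp: mdisj_def)
    ultimately show ?thesis
      unfolding cc_deg_def by blast
  qed
  then show ?thesis
    unfolding bcc_expansion[OF md] Ok_eq_span_cc_deg
    by (intro cmod.span_sum cmod.span_scale cmod.span_base) auto
qed

lemma bcc_orthogonal_Ok:
  assumes md: "mdisj n K I J" and deg: "\<not> (\<exists>l\<le>k. card I + card J + 2 * card K = 2 * l)"
    and M: "M \<in> Ok n k"
  shows "hs_inner n (bcc n K I J) M = 0"
proof (rule hs_inner_span_zero[OF _ M[unfolded Ok_eq_span_cc_deg]])
  fix g assume "g \<in> cc_deg n k"
  then obtain A B l where g: "g = cc n A B" "A \<subseteq> Nn n" "B \<subseteq> Nn n" "card A + card B = 2 * l" "l \<le> k"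
    by (auto simp: cc_deg_def)
  have "\<not> (\<exists>L. K \<subseteq> L \<and> A = I \<union> L \<and> B = J \<union> L \<and> L \<inter> (I \<union> J) = {})"
  proof
    assume "\<exists>L. K \<subseteq> L \<and> A = I \<union> L \<and> B = J \<union> L \<and> L \<inter> (I \<union> J) = {}"
    then obtain L where L: "K \<subseteq> L" "A = I \<union> L" "B = J \<union> L" "L \<inter> (I \<union> J) = {}"
      by blast
    have "finite I" "finite J" "finite L"
      using g(2,3) L(2,3) finite_subset[OF _ finite_Nn] by (metis finite_Un)+
    moreover have "I \<inter> L = {}" "J \<inter> L = {}"
      using L(4) by auto
    ultimately have "card A = card I + card L" "card B = card J + card L" "card K \<le> card L"
      using L(1-3) by (simp_all add: card_Un_disjoint card_mono)
    then have deg_L: "card I + card J + 2 * card L = 2 * l"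
      using g(4) by simp
    then have "card L \<le> l"
      by linarith
    then obtain m where m: "l = card L + m"
      using le_Suc_ex by blast
    have "card I + card J + 2 * card K = 2 * (m + card K)"
      using deg_L m by presburger
    moreover have "m + card K \<le> k"
      using m g(5) \<open>card K \<le> card L\<close> by linarith
    ultimately show False
      using deg by blast
  qed
  then show "hs_inner n (bcc n K I J) g = 0"
    using hs_inner_bcc_cc_eq_0[OF md] g(1) by simp
qed

lemma bvec_in_Ok:
  assumes i: "i \<in> Bidx n R" and deg: "bdeg_ok k i"
  shows "bvec n i \<in> Ok n k"
  using i
proof (cases rule: Bidx_cases)
  case (BD K)
  then have "bcc n K {} {} \<in> Ok n k"
    using deg by (intro bcc_in_Ok[OF mdisj_empty, of _ _ "card K"]) auto
  then show ?thesis
    by (simp add: BD bvec_BD_eq Ok_eq_span_cc_deg cmod.span_scale)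
next
  case (BRe K I J)
  then obtain l where "l \<le> k" "card I + card J + 2 * card K = 2 * l"
    using deg by auto
  then have "bcc n K I J \<in> Ok n k" "bcc n K J I \<in> Ok n k"
    using bcc_in_Ok BRe(2) mdisj_sym by (metis add.commute)+
  then show ?thesis
    by (simp add: BRe bvec_BRe_eq Ok_eq_span_cc_deg cmod.span_scale cmod.span_add)
next
  case (BIm K I J)
  then obtain l where "l \<le> k" "card I + card J + 2 * card K = 2 * l"
    using deg by auto
  then have "bcc n K I J \<in> Ok n k" "bcc n K J I \<in> Ok n k"
    using bcc_in_Ok BIm(2) mdisj_sym by (metis add.commute)+
  then show ?thesis
    by (simp add: BIm bvec_BIm_eq Ok_eq_span_cc_deg cmod.span_scale cmod.span_diff cmod.span_neg)
qed

lemma bvec_orthogonal_Ok: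
  assumes i: "i \<in> Bidx n R" and deg: "\<not> bdeg_ok k i" and M: "M \<in> Ok n k"
  shows "hs_inner n (bvec n i) M = 0"
  using i
proof (cases rule: Bidx_cases)
  case (BD K)
  then show ?thesis
    using deg bcc_orthogonal_Ok[OF mdisj_empty _ M] by (simp add: bvec_BD_eq)
next
  case (BRe K I J)
  then show ?thesis
    using deg bcc_orthogonal_Ok[OF BRe(2) _ M] bcc_orthogonal_Ok[OF mdisj_sym[OF BRe(2)] _ M]
    by (simp add: bvec_BRe_eq add.commute)
next
  case (BIm K I J)
  then show ?thesis
    using deg bcc_orthogonal_Ok[OF BIm(2) _ M] bcc_orthogonal_Ok[OF mdisj_sym[OF BIm(2)] _ M]
    by (simp add: bvec_BIm_eq add.commute)
qed

lemma bvec_in_Osa_iff: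
  assumes R: "strict_linear_order_on (Pow (Nn n)) R" and i: "i \<in> Bidx n R"
  shows "bvec n i \<in> Osa n k \<longleftrightarrow> bdeg_ok k i"
proof
  assume "bvec n i \<in> Osa n k"
  then have "bvec n i \<in> Ok n k"
    by (simp add: Osa_def)
  moreover have "hs_inner n (bvec n i) (bvec n i) = 1"
    using bvec_orthonormal[OF R] i by (simp add: orthonormal_fam_def)
  ultimately show "bdeg_ok k i"
    using bvec_orthogonal_Ok[OF i] by fastforce
next
  assume "bdeg_ok k i"
  then show "bvec n i \<in> Osa n k"
    using bvec_in_Ok[OF i] bvec_self_adjoint[OF i] by (simp add: Osa_def)
qed

lemma Osa_real_subspace: "rmod.subspace (Osa n k)"
  by (auto simp: rmod.subspace_def Osa_def Ok_eq_span_cc_deg fun_eq_iff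
      cmod.span_zero cmod.span_add cmod.span_scale)

lemma rspan_bvec_Osa:
  assumes R: "strict_linear_order_on (Pow (Nn n)) R"
  shows "rmod.span (bvec n ` {i \<in> Bidx n R. bvec n i \<in> Osa n k}) = Osa n k"
proof
  show "rmod.span (bvec n ` {i \<in> Bidx n R. bvec n i \<in> Osa n k}) \<subseteq> Osa n k"
    by (intro rmod.span_minimal Osa_real_subspace) auto
next
  show "Osa n k \<subseteq> rmod.span (bvec n ` {i \<in> Bidx n R. bvec n i \<in> Osa n k})"
  proof
    fix M assume M: "M \<in> Osa n k"
    let ?S = "{i \<in> Bidx n R. bvec n i \<in> Osa n k}"
    have "M \<in> cmod.span (bvec n ` Bidx n R)"
      using M Ok_subset_L2 span_bvec_eq_L2[OF R] by (auto simp: Osa_def)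
    then have "M = (\<Sum>i\<in>Bidx n R. smul (hs_inner n (bvec n i) M) (bvec n i))"
      by (rule orthonormal_expansion[OF bvec_orthonormal[OF R] finite_Bidx])
    also have "\<dots> = (\<Sum>i\<in>?S. smul (complex_of_real (Re (hs_inner n (bvec n i) M))) (bvec n i))"
    proof (rule sum.mono_neutral_cong_right)
      show "\<forall>i\<in>Bidx n R - ?S. smul (hs_inner n (bvec n i) M) (bvec n i) = 0"
      proof
        fix i assume "i \<in> Bidx n R - ?S"
        then have "i \<in> Bidx n R" "\<not> bdeg_ok k i"
          using bvec_in_Osa_iff[OF R] by auto
        then have "hs_inner n (bvec n i) M = 0"
          using M bvec_orthogonal_Ok by (auto simp: Osa_def)
        then show "smul (hs_inner n (bvec n i) M) (bvec n i) = 0"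
          by simp
      qed
      show "smul (hs_inner n (bvec n i) M) (bvec n i) =
          smul (complex_of_real (Re (hs_inner n (bvec n i) M))) (bvec n i)" if "i \<in> ?S" for i
      proof -
        have "cnj (hs_inner n (bvec n i) M) = hs_inner n (bvec n i) M"
          using that M by (intro hs_inner_self_adjoint_real) (auto simp: Osa_def)
        then show ?thesis
          by (metis Reals_cnj_iff complex_is_Real_iff of_real_Re)
      qed
    qed (auto simp: finite_Bidx)
    also have "\<dots> \<in> rmod.span (bvec n ` ?S)"
      by (intro rmod.span_sum rmod.span_scale rmod.span_base) auto
    finally show "M \<in> rmod.span (bvec n ` ?S)" .
  qed
qed

theorem theorem4p6:
  fixes n :: nat and R :: "(nat set \<times> nat set) set"
  assumes "strict_linear_order_on (Pow (Nn n)) R"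
  shows "(\<forall>i\<in>Bidx n R. adj (bvec n i) = bvec n i)
       \<and> (\<forall>i\<in>Bidx n R. bvec n i \<in> L2 n)
       \<and> orthonormal_fam n (Bidx n R) (bvec n)
       \<and> cspan (bvec n ` Bidx n R) = L2 n
       \<and> (\<forall>k::nat.
            {i \<in> Bidx n R. bvec n i \<in> Osa n k} = {i \<in> Bidx n R. bdeg_ok k i}
          \<and> rspan (bvec n ` {i \<in> Bidx n R. bvec n i \<in> Osa n k}) = Osa n k)"
  using bvec_self_adjoint bvec_in_L2 bvec_orthonormal[OF assms] span_bvec_eq_L2[OF assms]
    bvec_in_Osa_iff[OF assms] rspan_bvec_Osa[OF assms]
  by (auto simp: cspan_eq_span rspan_eq_span)

end
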